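(* Let $\pi$ be a permutation of $[n]$ with run decomposition $(D^{(0)}_\pi,A^{(1)}_\pi,D^{(1)}_\pi,A^{(2)}_\pi,\ldots)$, and let $r=\mathsf{minrec}(\pi)$. Then for each $i\in[1,n]$, \[ r_i=\begin{cases}|\{j\in A^{(k)}_\pi: j>i,\ k>\ell\}| & \text{if } i\in D^{(\ell)}_\pi,\\ |\{j\in D^{(k)}_\pi: j<i,\ k\ge \ell\}| & \text{if } i\in A^{(\ell)}_\pi.\end{cases} \]
   Context: Permutations: for a permutation $\pi=\pi_1\cdots\pi_n$ of $[n]$, $\pi_i$ is an ascent top if $i=1$ or $\pi_{i-1}<\pi_i$, a descent bottom if $\pi_{i-1}>\pi_i$. The run decomposition $\mathsf{RunDec}(\pi)=(D^{(0)}_\pi,A^{(1)}_\pi,D^{(1)}_\pi,A^{(2)}_\pi,\ldots)$ consists of $D^{(0)}_\pi=\{0\}$ followed by the letter sets of the maximal factors of $\pi$ consisting alternately of ascent tops ($A$-blocks) and descent bottoms ($D$-blocks). Ferrers diagrams and graphs: a Ferrers diagram $F$ (English convention) of semiperimeter $n+1$ has rows and columns labeled by $0,\ldots,n$: the $n+1$ unit steps of its south-east boundary path, traversed from top-right to bottom-left, are labeled $0,\ldots,n$; a vertical step labels the row it bounds, a horizontal step the column it bounds (top row labeled $0$). $\mathsf{rows}(F)$, $\mathsf{cols}(F)$ are the label sets; $F$ has a cell in row $i$, column $j$ iff $i<j$. $G(F)$ has vertex set $\{0,\ldots,n\}$ with edges $\{i,j\}$ for $i\in\mathsf{rows}(F)$,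 $j\in\mathsf{cols}(F)$, $i<j$. Sandpile model on $G(F)$ with sink $0$: configurations $c\in\mathbb{N}^n$; non-sink $v$ unstable if $c_v\ge\deg(v)$; toppling sends one grain to each neighbour (grains to $0$ disappear); toppling the sink adds one grain to each neighbour of $0$. Canonical toppling of a recurrent $c$: topple the sink ($U^{(0)}_c=\{0\}$), then alternately topple simultaneously all unstable vertices in $\mathsf{cols}(F)$ ($V^{(1)}_c$), all unstable in $\mathsf{rows}(F)$ ($U^{(1)}_c$), etc., giving the ordered partition $\mathsf{CanonTop}(c)=(U^{(0)}_c,V^{(1)}_c,U^{(1)}_c,\ldots)$ of $\{0,\ldots,n\}$. EW-tableaux: $0/1$-fillings $T$ of $F$ with top row all 1s, a 0 in every other row, and no rectangle with 0s in two diagonally opposite corners and 1s in the other two; $\mathsf{EWtab}(F)$ is their set. $\phi_{TC}(T)$ is the configuration on $G(F)$ with $c_i$ = number of 1s in row $i$ ($i\in\mathsf{rows}(F)$), $c_i$ = number of 0s in column $i$ ($i\in\mathsf{cols}(F)$); it is a minimal recurrent configuration. With $\mathsf{CanonTop}(T):=\mathsf{CanonTop}(\phi_{TC}(T))=(U^{(0)}_T,V^{(1)}_T,U^{(1)}_T,\ldots)$, $\Psi(T)$ is the word $\mathsf{inc}(V^{(1)}_T)\,\mathsf{dec}(U^{(1)}_T)\,\mathsf{inc}(V^{(2)}_T)\cdots$; $\Psi$ is a (known) bijection from $\mathsf{EWtab}(F)$ onto the permutations of $[n]$ whose set of descent bottoms is $\mathsf{rows}(F)\setminus\{0\}$. For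 a permutation $\pi$ of $[n]$, let $F$ be the Ferrers diagram of semiperimeter $n+1$ with $\mathsf{rows}(F)=\{0\}\cup\{\text{descent bottoms of }\pi\}$, and define $\mathsf{minrec}(\pi):=\phi_{TC}(\Psi^{-1}(\pi))$, a configuration on $G(F)$. *)

theory Defs
  imports Main
begin

text \<open>Position p (0-based) holds an ascent top iff p = 0 or the previous letter is smaller;
  otherwise it holds a descent bottom.\<close>
definition asc_top :: "nat list \<Rightarrow> nat \<Rightarrow> bool" where
  "asc_top w p \<longleftrightarrow> p = 0 \<or> w ! (p - 1) < w ! p"

text \<open>Number of changes of type (ascent top / descent bottom) among positions 0..p;
  this counts how many maximal factors precede the one containing position p.\<close>
definition run_changes :: "nat list \<Rightarrow> nat \<Rightarrow> nat" where
  "run_changes w p = card {q. 1 \<le> q \<and> q \<le> p \<and> asc_top w q \<noteq> asc_top w (q - 1)}"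

text \<open>A^(k) (k >= 1): letters of the k-th maximal factor of ascent tops.\<close>
definition A_block :: "nat list \<Rightarrow> nat \<Rightarrow> nat set" where
  "A_block w k = {w ! p | p. p < length w \<and> asc_top w p \<and> run_changes w p div 2 + 1 = k}"

text \<open>D^(0) = {0}; D^(k) (k >= 1): letters of the k-th maximal factor of descent bottoms.\<close>
definition D_block :: "nat list \<Rightarrow> nat \<Rightarrow> nat set" where
  "D_block w k = (if k = 0 then {0} else
     {w ! p | p. p < length w \<and> \<not> asc_top w p \<and> (run_changes w p + 1) div 2 = k})"

section \<open>Ferrers diagrams (given by their row label set R, semiperimeter n+1) and G(F)\<close>

definition fcols :: "nat set \<Rightarrow> nat \<Rightarrow> nat set" where
  "fcols R n = {0..n} - R"

definition cell :: "nat set \<Rightarrow> nat \<Rightarrow> nat \<Rightarrow> nat \<Rightarrow> bool" where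
  "cell R n i j \<longleftrightarrow> i \<in> R \<and> j \<in> fcols R n \<and> i < j"

definition adj :: "nat set \<Rightarrow> nat \<Rightarrow> nat \<Rightarrow> nat \<Rightarrow> bool" where
  "adj R n u v \<longleftrightarrow> cell R n u v \<or> cell R n v u"

definition deg :: "nat set \<Rightarrow> nat \<Rightarrow> nat \<Rightarrow> nat" where
  "deg R n v = card {u. u \<le> n \<and> adj R n u v}"

section \<open>Sandpile model on G(F) with sink 0; configurations are functions on [n] (0 elsewhere)\<close>

definition sink_topple :: "nat set \<Rightarrow> nat \<Rightarrow> (nat \<Rightarrow> nat) \<Rightarrow> (nat \<Rightarrow> nat)" where
  "sink_topple R n c = (\<lambda>v. if v \<in> {1..n} then c v + (if adj R n 0 v then 1 else 0) else 0)"

definition topple_set :: "nat set \<Rightarrow> nat \<Rightarrow> nat set \<Rightarrow> (nat \<Rightarrow> nat) \<Rightarrow> (nat \<Rightarrow> nat)" where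
  "topple_set R n S c = (\<lambda>v. if v \<in> {1..n}
     then c v - (if v \<in> S then deg R n v else 0) + card {u \<in> S. adj R n u v} else 0)"

definition phase_set :: "nat set \<Rightarrow> nat \<Rightarrow> (nat \<Rightarrow> nat) \<Rightarrow> nat \<Rightarrow> nat set" where
  "phase_set R n c k = {v \<in> {1..n}. (if odd k then v \<in> fcols R n else v \<in> R)
                                     \<and> deg R n v \<le> c v}"

primrec canon_conf :: "nat set \<Rightarrow> nat \<Rightarrow> (nat \<Rightarrow> nat) \<Rightarrow> nat \<Rightarrow> (nat \<Rightarrow> nat)" where
  "canon_conf R n c 0 = sink_topple R n c"
| "canon_conf R n c (Suc k) =
     topple_set R n (phase_set R n (canon_conf R n c k) (Suc k)) (canon_conf R n c k)"

text \<open>canon_top R n c 0 = U^(0) = {0}; canon_top R n c (2k-1) = V^(k); canon_top R n c (2k) = U^(k).\<close>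
definition canon_top :: "nat set \<Rightarrow> nat \<Rightarrow> (nat \<Rightarrow> nat) \<Rightarrow> nat \<Rightarrow> nat set" where
  "canon_top R n c k = (if k = 0 then {0} else phase_set R n (canon_conf R n c (k - 1)) k)"

text \<open>A 0/1 filling is a predicate T (True = 1) which is False outside the cells of F.\<close>
definition EWtab :: "nat set \<Rightarrow> nat \<Rightarrow> (nat \<Rightarrow> nat \<Rightarrow> bool) set" where
  "EWtab R n = {T.
     (\<forall>i j. T i j \<longrightarrow> cell R n i j)
   \<and> (\<forall>j. cell R n 0 j \<longrightarrow> T 0 j)
   \<and> (\<forall>i \<in> R - {0}. \<exists>j. cell R n i j \<and> \<not> T i j)
   \<and> (\<forall>i1 i2 j1 j2. i1 < i2 \<and> j1 < j2 \<and> cell R n i1 j1 \<and> cell R n i1 j2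
         \<and> cell R n i2 j1 \<and> cell R n i2 j2 \<longrightarrow>
        \<not> (\<not> T i1 j1 \<and> \<not> T i2 j2 \<and> T i1 j2 \<and> T i2 j1)
      \<and> \<not> (\<not> T i1 j2 \<and> \<not> T i2 j1 \<and> T i1 j1 \<and> T i2 j2))}"

definition phi_TC :: "nat set \<Rightarrow> nat \<Rightarrow> (nat \<Rightarrow> nat \<Rightarrow> bool) \<Rightarrow> (nat \<Rightarrow> nat)" where
  "phi_TC R n T = (\<lambda>v. if v \<in> {1..n} then
     (if v \<in> R then card {j. cell R n v j \<and> T v j} else card {i. cell R n i v \<and> \<not> T i v})
     else 0)"

text \<open>The word inc(V^(1)) dec(U^(1)) inc(V^(2)) ...; phases beyond 2n+2 are empty.\<close>
definition canon_word :: "nat set \<Rightarrow> nat \<Rightarrow> (nat \<Rightarrow> nat) \<Rightarrow> nat list" where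
  "canon_word R n c = concat (map (\<lambda>k. if odd k then sorted_list_of_set (canon_top R n c k)
                                      else rev (sorted_list_of_set (canon_top R n c k)))
                                 [1..<2 * n + 3])"

definition Psi :: "nat set \<Rightarrow> nat \<Rightarrow> (nat \<Rightarrow> nat \<Rightarrow> bool) \<Rightarrow> nat list" where
  "Psi R n T = canon_word R n (phi_TC R n T)"

text \<open>rows(F) for the permutation: {0} together with its descent bottoms.\<close>
definition perm_rows :: "nat list \<Rightarrow> nat set" where
  "perm_rows w = insert 0 {w ! p | p. p < length w \<and> \<not> asc_top w p}"

definition minrec :: "nat \<Rightarrow> nat list \<Rightarrow> (nat \<Rightarrow> nat)" where
  "minrec n w = phi_TC (perm_rows w) n
     (THE T. T \<in> EWtab (perm_rows w) n \<and> Psi (perm_rows w) n T = w)"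

end

theory Submission
  imports Defs
begin

text \<open>Let r(v) be the run index of the letter v of \<pi>, i.e. the position of its maximal factor
  in the sequence A(1), D(1), A(2), D(2), ... The tableau with a 1 in cell (i, j) exactly when
  r(i) < r(j) is an EW-tableau; in its configuration every edge of G(F) gives its grain to the end
  of smaller run index, and the canonical toppling topples precisely the letters of run index k
  in phase k, so Psi maps this tableau to \<pi>. Conversely, the canonical word of a stable
  configuration determines its phases, because consecutive phases alternate between columns and
  rows. If another EW-tableau T had Psi T = \<pi>, then on an edge where T disagrees, chosen with
  smallest lower run index, the lower end would not receive enough grains to topple in its
  phase. Hence minrec(\<pi>) counts, at each vertex, its neighbours of larger run index, which is
  the stated formula.\<close>

section \<open>Canonical toppling of stable configurations\<close>

definition phase_type :: "nat set \<Rightarrow> nat \<Rightarrow> nat \<Rightarrow> nat \<Rightarrow> bool" where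
  "phase_type R n k v \<longleftrightarrow> (if odd k then v \<in> fcols R n else v \<in> R)"

definition toppled :: "nat set \<Rightarrow> nat \<Rightarrow> (nat \<Rightarrow> nat) \<Rightarrow> nat \<Rightarrow> nat set" where
  "toppled R n c m = insert 0 (\<Union>k\<in>{1..m}. canon_top R n c k)"

lemma canon_top_Suc: "canon_top R n c (Suc m) = phase_set R n (canon_conf R n c m) (Suc m)"
  by (simp add: canon_top_def)

lemma canon_top_subset: "1 \<le> k \<Longrightarrow> canon_top R n c k \<subseteq> {1..n}"
  by (auto simp: canon_top_def phase_set_def)

lemma finite_canon_top: "1 \<le> k \<Longrightarrow> finite (canon_top R n c k)"
  by (rule finite_subset[OF canon_top_subset]) simp_all

lemma phase_type_canon_top: "1 \<le> k \<Longrightarrow> v \<in> canon_top R n c k \<Longrightarrow> phase_type R n k v"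
  by (auto simp: canon_top_def phase_set_def phase_type_def split: if_splits)

lemma phase_type_Suc: "v \<in> {1..n} \<Longrightarrow> phase_type R n k v \<Longrightarrow> \<not> phase_type R n (Suc k) v"
  by (auto simp: phase_type_def fcols_def)

lemma toppled_subset: "toppled R n c m \<subseteq> {0..n}"
  using canon_top_subset[of _ R n c] by (fastforce simp: toppled_def)

lemma toppled_0: "toppled R n c 0 = {0}"
  by (simp add: toppled_def)

lemma toppled_Suc: "toppled R n c (Suc m) = toppled R n c m \<union> canon_top R n c (Suc m)"
  by (auto simp: toppled_def atLeastAtMostSuc_conv)

lemma adj_sym: "adj R n u v \<longleftrightarrow> adj R n v u"
  by (auto simp: adj_def)

lemma adj_le: "adj R n u v \<Longrightarrow> u \<le> n"
  by (auto simp: adj_def cell_def fcols_def)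

lemma finite_adj: "finite {u. adj R n u v}"
  by (rule finite_subset[of _ "{0..n}"]) (auto dest: adj_le)

lemma deg_eq_card_adj: "deg R n v = card {u. adj R n u v}"
  unfolding deg_def by (metis adj_le)

lemma phase_type_not_adj: "phase_type R n k u \<Longrightarrow> phase_type R n k v \<Longrightarrow> \<not> adj R n u v"
  by (auto simp: phase_type_def adj_def cell_def fcols_def split: if_splits)

definition phase_word :: "nat set \<Rightarrow> nat \<Rightarrow> (nat \<Rightarrow> nat) \<Rightarrow> nat \<Rightarrow> nat list" where
  "phase_word R n c k = (if odd k then sorted_list_of_set (canon_top R n c k)
                          else rev (sorted_list_of_set (canon_top R n c k)))"

lemma canon_word_eq_concat_phase_word:
  "canon_word R n c = concat (map (phase_word R n c) [1..<2*n+3])"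
  unfolding canon_word_def phase_word_def ..

lemma set_phase_word: "1 \<le> k \<Longrightarrow> set (phase_word R n c k) = canon_top R n c k"
  using finite_canon_top by (simp add: phase_word_def)

lemma phase_word_eq_Nil_iff: "1 \<le> k \<Longrightarrow> phase_word R n c k = [] \<longleftrightarrow> canon_top R n c k = {}"
  by (metis set_empty set_phase_word)

locale stable_config =
  fixes R :: "nat set" and n :: nat and c :: "nat \<Rightarrow> nat"
  assumes stable: "\<And>v. v \<in> {1..n} \<Longrightarrow> c v < deg R n v"
begin

text \<open>Stability of c is what prevents a toppled vertex from toppling again.\<close>
lemma canon_top_Suc_if_balanced:
  assumes balanced: "\<And>v. v \<in> {1..n} \<Longrightarrow>
      canon_conf R n c m v + (if v \<in> toppled R n c m then deg R n v else 0)
        = c v + card {u \<in> toppled R n c m. adj R n u v}"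
  shows "canon_top R n c (Suc m) = {v \<in> {1..n}. phase_type R n (Suc m) v \<and> v \<notin> toppled R n c m
           \<and> deg R n v \<le> c v + card {u \<in> toppled R n c m. adj R n u v}}"
proof (intro set_eqI iffI)
  fix v assume v: "v \<in> canon_top R n c (Suc m)"
  hence v1: "v \<in> {1..n}" and unstable: "deg R n v \<le> canon_conf R n c m v"
    by (auto simp: canon_top_Suc phase_set_def)
  have "card {u \<in> toppled R n c m. adj R n u v} \<le> deg R n v"
    unfolding deg_eq_card_adj by (rule card_mono[OF finite_adj]) auto
  hence "v \<notin> toppled R n c m"
    using balanced[OF v1] unstable stable[OF v1] by auto
  with balanced[OF v1] unstable v1 phase_type_canon_top[OF _ v]
  show "v \<in> {v \<in> {1..n}. phase_type R n (Suc m) v \<and> v \<notin> toppled R n c m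
           \<and> deg R n v \<le> c v + card {u \<in> toppled R n c m. adj R n u v}}"
    by simp
next
  fix v assume "v \<in> {v \<in> {1..n}. phase_type R n (Suc m) v \<and> v \<notin> toppled R n c m
           \<and> deg R n v \<le> c v + card {u \<in> toppled R n c m. adj R n u v}}"
  with balanced[of v] show "v \<in> canon_top R n c (Suc m)"
    by (auto simp: canon_top_Suc phase_set_def phase_type_def split: if_splits)
qed

lemma canon_conf_balanced:
  "v \<in> {1..n} \<Longrightarrow> canon_conf R n c m v + (if v \<in> toppled R n c m then deg R n v else 0)
     = c v + card {u \<in> toppled R n c m. adj R n u v}"
proof (induction m arbitrary: v)
  case 0
  have "{u \<in> {0}. adj R n u v} = (if adj R n 0 v then {0} else {})" by auto
  with "0" show ?case by (simp add: toppled_0 sink_topple_def)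
next
  case (Suc m)
  let ?P = "canon_top R n c (Suc m)" and ?X = "toppled R n c m"
  have disjoint: "?P \<inter> ?X = {}"
    using canon_top_Suc_if_balanced[OF Suc.IH] by auto
  have "card ({u \<in> ?X. adj R n u v} \<union> {u \<in> ?P. adj R n u v})
      = card {u \<in> ?X. adj R n u v} + card {u \<in> ?P. adj R n u v}"
  proof (rule card_Un_disjoint)
    show "finite {u \<in> ?X. adj R n u v}"
      by (rule finite_subset[OF _ finite_atLeastAtMost[of 0 n]]) (use toppled_subset in blast)
    show "finite {u \<in> ?P. adj R n u v}"
      using finite_canon_top[of "Suc m" R n c] by simp
  qed (use disjoint in blast)
  moreover have "{u \<in> ?X \<union> ?P. adj R n u v} = {u \<in> ?X. adj R n u v} \<union> {u \<in> ?P. adj R n u v}"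
    by blast
  ultimately have card_split: "card {u \<in> ?X \<union> ?P. adj R n u v}
      = card {u \<in> ?X. adj R n u v} + card {u \<in> ?P. adj R n u v}"
    by simp
  have conf: "canon_conf R n c (Suc m) v = canon_conf R n c m v - (if v \<in> ?P then deg R n v else 0)
      + card {u \<in> ?P. adj R n u v}"
    using Suc.prems by (simp add: topple_set_def canon_top_Suc)
  show ?case
  proof (cases "v \<in> ?P")
    case True
    hence "v \<notin> ?X" "deg R n v \<le> canon_conf R n c m v"
      using disjoint by (auto simp: canon_top_Suc phase_set_def)
    with Suc.IH[OF Suc.prems] conf card_split True show ?thesis
      by (simp add: toppled_Suc)
  next
    case False
    with Suc.IH[OF Suc.prems] conf card_split show ?thesis
      by (simp add: toppled_Suc)
  qed
qed

lemma canon_top_Suc_eq: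
  "canon_top R n c (Suc m) = {v \<in> {1..n}. phase_type R n (Suc m) v \<and> v \<notin> toppled R n c m
      \<and> deg R n v \<le> c v + card {u \<in> toppled R n c m. adj R n u v}}"
  using canon_top_Suc_if_balanced canon_conf_balanced by blast

lemma canon_top_empty_Suc:
  assumes "canon_top R n c (Suc m) = {}"
  shows "canon_top R n c (Suc (Suc m)) = {}"
proof (rule ccontr)
  assume "canon_top R n c (Suc (Suc m)) \<noteq> {}"
  then obtain v where "v \<in> canon_top R n c (Suc (Suc m))" by auto
  moreover have "toppled R n c (Suc m) = toppled R n c m"
    using assms by (simp add: toppled_Suc)
  ultimately have v: "v \<in> {1..n}" and type: "phase_type R n (Suc (Suc m)) v"
    and untoppled: "v \<notin> toppled R n c m"
    and unstable: "deg R n v \<le> c v + card {u \<in> toppled R n c m. adj R n u v}"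
    by (auto simp: canon_top_Suc_eq[of "Suc m"])
  show False
  proof (cases m)
    case 0
    have "{u \<in> toppled R n c m. adj R n u v} = {}"
      using type 0 by (auto simp: toppled_0 phase_type_def adj_def cell_def fcols_def)
    with unstable stable[OF v] show False by simp
  next
    case (Suc m')
    have type': "phase_type R n (Suc m') v"
      using type Suc by (simp add: phase_type_def)
    have "{u \<in> toppled R n c m. adj R n u v} = {u \<in> toppled R n c m'. adj R n u v}"
      using Suc phase_type_not_adj[OF phase_type_canon_top[of "Suc m'" _ R n c] type']
      by (auto simp: toppled_Suc)
    with v type' untoppled unstable have "v \<in> canon_top R n c (Suc m')"
      using Suc by (simp add: canon_top_Suc_eq[of m'] toppled_Suc)
    with untoppled Suc show False by (simp add: toppled_Suc)
  qed
qed

lemma canon_top_empty_mono: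
  assumes "canon_top R n c k = {}" "1 \<le> k" "k \<le> k'"
  shows "canon_top R n c k' = {}"
  using assms(3,1,2)
proof (induction k' rule: dec_induct)
  case (step k')
  then obtain m where "k' = Suc m" by (cases k') auto
  with step canon_top_empty_Suc show ?case by simp
qed simp

text \<open>Consecutive phases have opposite types, so a phase is recovered from the canonical word
  as the longest prefix of vertices of its type.\<close>
lemma takeWhile_phase_words:
  assumes "1 \<le> k" "k < N"
  shows "takeWhile (phase_type R n k) (concat (map (phase_word R n c) [k..<N])) = phase_word R n c k"
proof -
  let ?rest = "concat (map (phase_word R n c) [Suc k..<N])"
  have "?rest = [] \<or> \<not> phase_type R n k (hd ?rest)"
  proof (cases "Suc k < N \<and> canon_top R n c (Suc k) \<noteq> {}")
    case True
    hence "phase_word R n c (Suc k) \<noteq> []" using phase_word_eq_Nil_iff by simp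
    moreover have "?rest = phase_word R n c (Suc k) @ concat (map (phase_word R n c) [Suc (Suc k)..<N])"
      using True by (simp add: upt_conv_Cons)
    ultimately have hd_rest: "hd ?rest \<in> canon_top R n c (Suc k)"
      using set_phase_word[of "Suc k" R n c] hd_in_set by fastforce
    hence "hd ?rest \<in> {1..n}" "phase_type R n (Suc k) (hd ?rest)"
      using canon_top_subset[of "Suc k" R n c] phase_type_canon_top[of "Suc k"] by auto
    thus ?thesis
      using phase_type_Suc by blast
  next
    case False
    hence "\<forall>j\<in>set [Suc k..<N]. phase_word R n c j = []"
      using canon_top_empty_mono[of "Suc k"] phase_word_eq_Nil_iff by auto
    thus ?thesis by simp
  qed
  moreover have "concat (map (phase_word R n c) [k..<N]) = phase_word R n c k @ ?rest"
    using assms by (simp add: upt_conv_Cons)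
  moreover have "\<forall>x\<in>set (phase_word R n c k). phase_type R n k x"
    using set_phase_word phase_type_canon_top assms(1) by blast
  ultimately show ?thesis
    by (auto simp: takeWhile_eq_Nil_iff)
qed

end

lemma canon_top_eq_if_canon_word_eq:
  assumes "stable_config R n c" "stable_config R n c'"
    and "canon_word R n c = canon_word R n c'"
  shows "1 \<le> k \<Longrightarrow> k < 2*n+3 \<Longrightarrow> canon_top R n c k = canon_top R n c' k"
proof (induction k rule: less_induct)
  case (less k)
  let ?N = "2*n+3"
  have prefix: "map (phase_word R n c) [1..<k] = map (phase_word R n c') [1..<k]"
    using less by (intro map_cong) (auto simp: phase_word_def)
  have split: "[1..<?N] = [1..<k] @ [k..<?N]"
    using upt_add_eq_append[of 1 k "?N - k"] less.prems by simp
  from assms(3) have "concat (map (phase_word R n c) [1..<k]) @ concat (map (phase_word R n c) [k..<?N])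
      = concat (map (phase_word R n c) [1..<k]) @ concat (map (phase_word R n c') [k..<?N])"
    unfolding canon_word_eq_concat_phase_word split map_append concat_append prefix .
  hence "phase_word R n c k = phase_word R n c' k"
    using stable_config.takeWhile_phase_words[OF assms(1) less.prems]
      stable_config.takeWhile_phase_words[OF assms(2) less.prems] by simp
  thus ?case using set_phase_word[of k R n] less.prems by metis
qed

section \<open>EW-tableaux as orientations of G(F)\<close>

text \<open>In \<open>phi_TC R n T\<close> every edge {u, v} of G(F) gives one grain to exactly one of its ends:
  to the row end if its cell holds a 1, to the column end if it holds a 0.\<close>
definition grain :: "nat set \<Rightarrow> (nat \<Rightarrow> nat \<Rightarrow> bool) \<Rightarrow> nat \<Rightarrow> nat \<Rightarrow> bool" where
  "grain R T u v \<longleftrightarrow> (if v \<in> R then T v u else \<not> T u v)"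

lemma phi_TC_eq_card_grain:
  "v \<in> {1..n} \<Longrightarrow> phi_TC R n T v = card {u. adj R n u v \<and> grain R T u v}"
  by (auto simp: phi_TC_def grain_def adj_def cell_def fcols_def intro!: arg_cong[where f = card])

lemma grain_swap: "adj R n u v \<Longrightarrow> grain R T u v \<longleftrightarrow> \<not> grain R T v u"
  by (auto simp: grain_def adj_def cell_def fcols_def)

lemma tableau_eqI:
  assumes "\<And>i j. T i j \<Longrightarrow> cell R n i j" "\<And>i j. T' i j \<Longrightarrow> cell R n i j"
    and "\<And>u v. adj R n u v \<Longrightarrow> grain R T u v \<longleftrightarrow> grain R T' u v"
  shows "T = T'"
proof (intro ext)
  fix i j
  show "T i j = T' i j"
  proof (cases "cell R n i j")
    case True
    hence "adj R n j i" "i \<in> R" by (auto simp: adj_def cell_def)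
    thus ?thesis using assms(3)[of j i] by (simp add: grain_def)
  next
    case False
    thus ?thesis using assms(1,2) by blast
  qed
qed

lemma stable_config_phi_TC:
  assumes "0 \<in> R" and T: "T \<in> EWtab R n"
  shows "stable_config R n (phi_TC R n T)"
proof
  fix v assume v: "v \<in> {1..n}"
  have "\<exists>u. adj R n u v \<and> \<not> grain R T u v"
  proof (cases "v \<in> R")
    case True
    from T have "\<forall>i\<in>R - {0}. \<exists>j. cell R n i j \<and> \<not> T i j" by (simp add: EWtab_def)
    with v True obtain j where "cell R n v j" "\<not> T v j" by force
    with True show ?thesis by (auto simp: adj_def grain_def)
  next
    case False
    with v assms(1) have "cell R n 0 v" by (simp add: cell_def fcols_def)
    with T False show ?thesis by (auto simp: EWtab_def adj_def grain_def)
  qed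
  then have "{u. adj R n u v \<and> grain R T u v} \<subset> {u. adj R n u v}" by blast
  then show "phi_TC R n T v < deg R n v"
    using v by (simp add: phi_TC_eq_card_grain deg_eq_card_adj psubset_card_mono[OF finite_adj])
qed

section \<open>Tableaux prescribed by toppling levels\<close>

text \<open>The level t v will turn out to be the phase in which v topples: rows in even phases,
  columns in odd ones, and every vertex is adjacent to one toppling in the phase just before.\<close>
locale toppling_levels =
  fixes R :: "nat set" and n :: nat and t :: "nat \<Rightarrow> nat"
  assumes rows_subset: "R \<subseteq> {0..n}" and sink_row: "0 \<in> R" and level_sink: "t 0 = 0"
    and level_range: "\<And>v. v \<in> {1..n} \<Longrightarrow> 1 \<le> t v \<and> t v \<le> n"
    and row_iff_even_level: "\<And>v. v \<in> {1..n} \<Longrightarrow> v \<in> R \<longleftrightarrow> even (t v)"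
    and adj_level_pred: "\<And>v. v \<in> {1..n} \<Longrightarrow> 2 \<le> t v \<Longrightarrow> \<exists>u. adj R n u v \<and> t u + 1 = t v"
begin

lemma cell_level_parity:
  assumes "cell R n i j"
  shows "even (t i) \<and> odd (t j)"
proof -
  from assms have "i \<in> R" "j \<in> {1..n}" "j \<notin> R" "i < j"
    by (auto simp: cell_def fcols_def)
  thus ?thesis
    using row_iff_even_level[of i] row_iff_even_level[of j] level_sink by (cases "i = 0") auto
qed

lemma adj_level_neq: "adj R n u v \<Longrightarrow> t u \<noteq> t v"
  unfolding adj_def by (auto dest: cell_level_parity)

lemma deg_level_split:
  "deg R n v = card {u. adj R n u v \<and> t v < t u} + card {u. adj R n u v \<and> t u < t v}"
proof -
  have "{u. adj R n u v} = {u. adj R n u v \<and> t v < t u} \<union> {u. adj R n u v \<and> t u < t v}"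
    using adj_level_neq by fastforce
  moreover have "card ({u. adj R n u v \<and> t v < t u} \<union> {u. adj R n u v \<and> t u < t v})
      = card {u. adj R n u v \<and> t v < t u} + card {u. adj R n u v \<and> t u < t v}"
    by (rule card_Un_disjoint) (auto intro: rev_finite_subset[OF finite_adj[of R n v]])
  ultimately show ?thesis
    by (simp only: deg_eq_card_adj)
qed

lemma phase_type_level:
  assumes "v \<in> {1..n}"
  shows "phase_type R n k v \<longleftrightarrow> (even k \<longleftrightarrow> even (t v))"
proof -
  have "v \<in> fcols R n \<longleftrightarrow> v \<notin> R" using assms by (simp add: fcols_def)
  thus ?thesis by (simp add: phase_type_def row_iff_even_level[OF assms])
qed

definition level_tableau :: "nat \<Rightarrow> nat \<Rightarrow> bool" where
  "level_tableau i j \<longleftrightarrow> cell R n i j \<and> t i < t j"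

abbreviation level_config :: "nat \<Rightarrow> nat" where
  "level_config \<equiv> phi_TC R n level_tableau"

lemma grain_level_tableau: "adj R n u v \<Longrightarrow> grain R level_tableau u v \<longleftrightarrow> t v < t u"
  using adj_level_neq[of u v] by (auto simp: grain_def level_tableau_def adj_def cell_def fcols_def)

lemma level_config_eq: "v \<in> {1..n} \<Longrightarrow> level_config v = card {u. adj R n u v \<and> t v < t u}"
  by (simp add: phi_TC_eq_card_grain grain_level_tableau cong: conj_cong)

lemma level_tableau_EWtab: "level_tableau \<in> EWtab R n"
proof -
  have "\<exists>j. cell R n i j \<and> \<not> level_tableau i j" if i: "i \<in> R - {0}" for i
  proof -
    have i1: "i \<in> {1..n}" using i rows_subset by auto
    moreover have "even (t i)" using i row_iff_even_level[OF i1] by auto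
    ultimately have "2 \<le> t i" using level_range[OF i1] by presburger
    then obtain u where u: "adj R n u i" "t u + 1 = t i" using adj_level_pred[OF i1] by blast
    with i have "cell R n i u" by (auto simp: adj_def cell_def fcols_def)
    with u show ?thesis by (auto simp: level_tableau_def)
  qed
  moreover have "level_tableau 0 j" if "cell R n 0 j" for j
    using that cell_level_parity[OF that] level_sink by (auto simp: level_tableau_def intro: odd_pos)
  ultimately show ?thesis
    unfolding EWtab_def by (auto simp: level_tableau_def)
qed

lemma stable_level_config: "stable_config R n level_config"
  using stable_config_phi_TC[OF sink_row level_tableau_EWtab] .

lemma level_eq_Suc_iff_no_gap:
  assumes v: "v \<in> {1..n}" and "m < t v" and "even (Suc m) \<longleftrightarrow> even (t v)"
  shows "t v = Suc m \<longleftrightarrow> (\<forall>u. adj R n u v \<longrightarrow> \<not> (m < t u \<and> t u < t v))"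
proof
  assume no_gap: "\<forall>u. adj R n u v \<longrightarrow> \<not> (m < t u \<and> t u < t v)"
  show "t v = Suc m"
  proof (rule ccontr)
    assume "t v \<noteq> Suc m"
    with assms(2,3) have "Suc (Suc m) < t v" by presburger
    moreover obtain u where "adj R n u v" "t u + 1 = t v"
      using adj_level_pred[OF v] calculation by auto
    ultimately show False using no_gap by auto
  qed
qed auto

lemma card_adj_below_le_iff:
  assumes "m < t v"
  shows "card {u. adj R n u v \<and> t u < t v} \<le> card {u. adj R n u v \<and> t u \<le> m}
     \<longleftrightarrow> (\<forall>u. adj R n u v \<longrightarrow> \<not> (m < t u \<and> t u < t v))"
proof
  let ?A = "{u. adj R n u v \<and> t u < t v}" and ?B = "{u. adj R n u v \<and> t u \<le> m}"
  assume le: "card ?A \<le> card ?B"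
  have "finite ?A" by (rule rev_finite_subset[OF finite_adj]) auto
  moreover have "?B \<subseteq> ?A" using assms by auto
  ultimately have "?B = ?A" using le by (rule card_seteq)
  thus "\<forall>u. adj R n u v \<longrightarrow> \<not> (m < t u \<and> t u < t v)"
    by (metis (mono_tags, lifting) mem_Collect_eq not_le)
next
  assume "\<forall>u. adj R n u v \<longrightarrow> \<not> (m < t u \<and> t u < t v)"
  with assms have "{u. adj R n u v \<and> t u < t v} = {u. adj R n u v \<and> t u \<le> m}"
    by (metis (mono_tags, lifting) le_less_trans not_le)
  thus "card {u. adj R n u v \<and> t u < t v} \<le> card {u. adj R n u v \<and> t u \<le> m}" by simp
qed

lemma canon_top_level_config_Suc:
  assumes toppled: "toppled R n level_config m = {u. u \<le> n \<and> t u \<le> m}"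
  shows "canon_top R n level_config (Suc m) = {v \<in> {1..n}. t v = Suc m}"
proof -
  have "phase_type R n (Suc m) v \<and> v \<notin> toppled R n level_config m
      \<and> deg R n v \<le> level_config v + card {u \<in> toppled R n level_config m. adj R n u v}
      \<longleftrightarrow> t v = Suc m" if v: "v \<in> {1..n}" for v
  proof (cases "m < t v \<and> (even (Suc m) \<longleftrightarrow> even (t v))")
    case True
    have "{u \<in> toppled R n level_config m. adj R n u v} = {u. adj R n u v \<and> t u \<le> m}"
      using toppled adj_le by auto
    hence "deg R n v \<le> level_config v + card {u \<in> toppled R n level_config m. adj R n u v}
        \<longleftrightarrow> card {u. adj R n u v \<and> t u < t v} \<le> card {u. adj R n u v \<and> t u \<le> m}"
      using deg_level_split[of v] level_config_eq[OF v] by simp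
    with True v show ?thesis
      by (simp add: toppled phase_type_level card_adj_below_le_iff level_eq_Suc_iff_no_gap)
  next
    case False
    with v show ?thesis by (auto simp: toppled phase_type_level)
  qed
  thus ?thesis
    unfolding stable_config.canon_top_Suc_eq[OF stable_level_config] by blast
qed

lemma toppled_level_config: "toppled R n level_config m = {u. u \<le> n \<and> t u \<le> m}"
proof (induction m)
  case 0
  have "u = 0" if "u \<le> n" "t u = 0" for u
    using that level_range[of u] by (cases "u = 0") auto
  thus ?case using level_sink by (auto simp: toppled_0)
next
  case (Suc m)
  show ?case
    using level_sink by (auto simp: toppled_Suc Suc canon_top_level_config_Suc[OF Suc] le_Suc_eq Suc_le_eq)
qed

lemma canon_top_level_config: "1 \<le> k \<Longrightarrow> canon_top R n level_config k = {v \<in> {1..n}. t v = k}"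
  using canon_top_level_config_Suc[OF toppled_level_config, of "k - 1"] by simp

text \<open>Induction on the lower level of an edge: the lower end v of an edge on which the grains
  first disagree would receive fewer grains than it needs to topple in phase t v.\<close>
lemma grain_eq_level:
  assumes sink: "\<And>j. cell R n 0 j \<Longrightarrow> T 0 j"
    and bound: "\<And>v. v \<in> {1..n} \<Longrightarrow>
      card {u. adj R n u v \<and> t v < t u} \<le> card {u. adj R n u v \<and> grain R T u v}"
    and "adj R n u v"
  shows "grain R T u v \<longleftrightarrow> t v < t u"
proof -
  have "\<forall>u v. adj R n u v \<and> min (t u) (t v) = s \<longrightarrow> (grain R T u v \<longleftrightarrow> t v < t u)" for s
  proof (induction s rule: less_induct)
    case (less s)
    have lower_end: "grain R T a b" if ab: "adj R n a b" "t b < t a" "t b = s" for a b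
    proof (cases "b = 0")
      case True
      with ab(1) have "cell R n 0 a" by (auto simp: adj_def cell_def)
      with True sink sink_row show ?thesis by (simp add: grain_def)
    next
      case False
      with ab(1) have b: "b \<in> {1..n}" using adj_le[of R n b a] by (simp add: adj_sym)
      have "{w. adj R n w b \<and> grain R T w b} \<subseteq> {w. adj R n w b \<and> t b < t w}"
      proof safe
        fix w assume w: "adj R n w b" "grain R T w b"
        show "t b < t w"
        proof (rule ccontr)
          assume "\<not> t b < t w"
          with adj_level_neq[OF w(1)] have "t w < t b" by simp
          with less.IH[of "t w"] w ab(3) show False by auto
        qed
      qed
      moreover have "finite {w. adj R n w b \<and> t b < t w}"
        by (rule rev_finite_subset[OF finite_adj]) auto
      ultimately have "{w. adj R n w b \<and> grain R T w b} = {w. adj R n w b \<and> t b < t w}"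
        using bound[OF b] by (intro card_seteq)
      with ab show ?thesis by blast
    qed
    show ?case
    proof (intro allI impI)
      fix u v assume uv: "adj R n u v \<and> min (t u) (t v) = s"
      show "grain R T u v \<longleftrightarrow> t v < t u"
      proof (cases "t v < t u")
        case True
        with uv lower_end[of u v] show ?thesis by simp
      next
        case False
        with adj_level_neq[of u v] uv have "t u < t v" by auto
        with uv lower_end[of v u] grain_swap[of R n u v T] show ?thesis by (auto simp: adj_sym)
      qed
    qed
  qed
  with assms(3) show ?thesis by blast
qed

lemma level_tableau_unique:
  assumes T: "T \<in> EWtab R n"
    and word: "canon_word R n (phi_TC R n T) = canon_word R n level_config"
  shows "T = level_tableau"
proof -
  let ?c = "phi_TC R n T"
  have stable: "stable_config R n ?c" using stable_config_phi_TC[OF sink_row T] .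
  have same_phase: "canon_top R n ?c k = canon_top R n level_config k" if "1 \<le> k" "k < 2*n+3" for k
    using canon_top_eq_if_canon_word_eq[OF stable stable_level_config word] that .
  have bound: "card {u. adj R n u v \<and> t v < t u} \<le> card {u. adj R n u v \<and> grain R T u v}"
    if v: "v \<in> {1..n}" for v
  proof -
    have range: "1 \<le> t v" "t v \<le> n" using level_range[OF v] by auto
    have "toppled R n ?c (t v - 1) = toppled R n level_config (t v - 1)"
      unfolding toppled_def using same_phase range by (intro arg_cong[where f = "insert 0"] SUP_cong) auto
    hence "{u \<in> toppled R n ?c (t v - 1). adj R n u v} = {u. adj R n u v \<and> t u < t v}"
      using range adj_le by (auto simp: toppled_level_config)
    moreover have "v \<in> canon_top R n ?c (Suc (t v - 1))"
      using same_phase[of "t v"] canon_top_level_config[of "t v"] range v by simp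
    ultimately have "deg R n v \<le> ?c v + card {u. adj R n u v \<and> t u < t v}"
      unfolding stable_config.canon_top_Suc_eq[OF stable] by simp
    thus ?thesis using deg_level_split[of v] phi_TC_eq_card_grain[OF v] by simp
  qed
  have "\<And>j. cell R n 0 j \<Longrightarrow> T 0 j" "\<And>i j. T i j \<Longrightarrow> cell R n i j"
    using T by (auto simp: EWtab_def)
  then show ?thesis
    using grain_eq_level[OF _ bound] grain_level_tableau
    by (intro tableau_eqI[of T R n]) (auto simp: level_tableau_def)
qed

end

section \<open>Run indices of a permutation\<close>

lemma run_changes_0: "run_changes w 0 = 0"
  by (simp add: run_changes_def)

lemma run_changes_Suc:
  "run_changes w (Suc p) = run_changes w p + (if asc_top w (Suc p) \<noteq> asc_top w p then 1 else 0)"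
proof -
  let ?C = "\<lambda>q. asc_top w q \<noteq> asc_top w (q - 1)"
  have "{q. 1 \<le> q \<and> q \<le> Suc p \<and> ?C q} = {q. 1 \<le> q \<and> q \<le> p \<and> ?C q} \<union> (if ?C (Suc p) then {Suc p} else {})"
    by (auto simp: le_Suc_eq)
  moreover have "finite {q. 1 \<le> q \<and> q \<le> p \<and> ?C q}"
    by (rule finite_subset[of _ "{..p}"]) auto
  ultimately show ?thesis unfolding run_changes_def by auto
qed

lemma asc_top_iff_even_run_changes: "asc_top w p \<longleftrightarrow> even (run_changes w p)"
  by (induction p) (auto simp: run_changes_0 run_changes_Suc asc_top_def)

lemma run_changes_mono: "p \<le> q \<Longrightarrow> run_changes w p \<le> run_changes w q"
  unfolding run_changes_def by (rule card_mono) (auto intro: finite_subset[of _ "{..q}"])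

lemma run_changes_le: "run_changes w p \<le> p"
  by (induction p) (auto simp: run_changes_0 run_changes_Suc)

lemma transp_chain:
  fixes a b :: nat
  assumes "transp Q" and step: "\<And>r. a < r \<Longrightarrow> r \<le> b \<Longrightarrow> Q (f (r - 1)) (f r)"
  shows "a < b \<Longrightarrow> Q (f a) (f b)"
  using step
proof (induction b)
  case (Suc b)
  hence "Q (f b) (f (Suc b))" by (metis diff_Suc_1 le_refl zero_less_Suc less_Suc_eq)
  with Suc assms(1) show ?case
    by (cases "a = b") (auto dest: transpD)
qed simp

lemma filter_key_less_Suc:
  fixes g :: "'a \<Rightarrow> nat"
  shows "sorted (map g xs) \<Longrightarrow>
    filter (\<lambda>x. g x < Suc b) xs = filter (\<lambda>x. g x < b) xs @ filter (\<lambda>x. g x = b) xs"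
proof (induction xs)
  case (Cons x xs)
  show ?case
  proof (cases "g x < b")
    case False
    with Cons.prems have "\<forall>y\<in>set xs. b \<le> g y" by force
    hence "filter (\<lambda>x. g x < b) xs = []" "filter (\<lambda>x. g x < Suc b) xs = filter (\<lambda>x. g x = b) xs"
      by (auto simp: filter_empty_conv intro!: filter_cong)
    with False show ?thesis by auto
  qed (use Cons in simp)
qed simp

lemma concat_filter_key:
  fixes g :: "'a \<Rightarrow> nat"
  assumes "sorted (map g xs)" "\<forall>x\<in>set xs. a \<le> g x"
  shows "concat (map (\<lambda>k. filter (\<lambda>x. g x = k) xs) [a..<b]) = filter (\<lambda>x. g x < b) xs"
proof (induction b)
  case 0
  thus ?case by (auto simp: filter_empty_conv)
next
  case (Suc b)
  show ?case
  proof (cases "a \<le> b")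
    case True
    with Suc filter_key_less_Suc[OF assms(1)] show ?thesis by simp
  next
    case False
    hence "filter (\<lambda>x. g x < Suc b) xs = []"
      using assms(2) by (force simp: filter_empty_conv)
    with False show ?thesis by simp
  qed
qed

lemma sorted_list_of_set_set_strict: "sorted_wrt (<) xs \<Longrightarrow> sorted_list_of_set (set xs) = xs"
  by (simp add: strict_sorted_iff sorted_list_of_set.idem_if_sorted_distinct)

locale perm_list =
  fixes n :: nat and \<pi> :: "nat list"
  assumes distinct: "distinct \<pi>" and set_eq: "set \<pi> = {1..n}"
begin

lemma length_eq: "length \<pi> = n"
  using distinct_card[OF distinct] set_eq by simp

lemma nth_in_range: "p < n \<Longrightarrow> \<pi> ! p \<in> {1..n}"
  using set_eq length_eq nth_mem by blast

lemma nth_eq_iff: "p < n \<Longrightarrow> q < n \<Longrightarrow> \<pi> ! p = \<pi> ! q \<longleftrightarrow> p = q"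
  using nth_eq_iff_index_eq[OF distinct] length_eq by simp

definition position :: "nat \<Rightarrow> nat" where
  "position v = (THE p. p < n \<and> \<pi> ! p = v)"

text \<open>\<open>run_index v = r + 1\<close>, where r is the number of type changes up to the position of v;
  so \<open>D_block \<pi> l\<close> and \<open>A_block \<pi> l\<close> consist of the letters of run index 2l and 2l - 1.\<close>
definition run_index :: "nat \<Rightarrow> nat" where
  "run_index v = (if v \<in> {1..n} then run_changes \<pi> (position v) + 1 else 0)"

lemma position_nth: "p < n \<Longrightarrow> position (\<pi> ! p) = p"
  unfolding position_def by (rule the_equality) (auto simp: nth_eq_iff)

lemma position_lt: "v \<in> {1..n} \<Longrightarrow> position v < n \<and> \<pi> ! position v = v"
  using set_eq length_eq position_nth by (metis in_set_conv_nth)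

lemma run_index_nth: "p < n \<Longrightarrow> run_index (\<pi> ! p) = run_changes \<pi> p + 1"
  using nth_in_range position_nth by (simp add: run_index_def)

lemma perm_rows_iff: "v \<in> {1..n} \<Longrightarrow> v \<in> perm_rows \<pi> \<longleftrightarrow> even (run_index v)"
proof -
  assume v: "v \<in> {1..n}"
  have "v \<in> perm_rows \<pi> \<longleftrightarrow> (\<exists>p<n. \<pi> ! p = v \<and> \<not> asc_top \<pi> p)"
    using v length_eq by (auto simp: perm_rows_def)
  also have "\<dots> \<longleftrightarrow> \<not> asc_top \<pi> (position v)"
    using position_lt[OF v] position_nth by metis
  finally show ?thesis
    using v by (simp add: run_index_def asc_top_iff_even_run_changes)
qed

lemma perm_rows_subset: "perm_rows \<pi> \<subseteq> {0..n}"
  using nth_in_range length_eq by (auto simp: perm_rows_def)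

lemma run_monotone:
  assumes "p < q" "q < n"
    and same_run: "\<And>r. p < r \<Longrightarrow> r \<le> q \<Longrightarrow> run_changes \<pi> r = run_changes \<pi> q"
  shows "(if even (run_changes \<pi> q) then (<) else (>)) (\<pi> ! p) (\<pi> ! q)"
proof -
  have "(if even (run_changes \<pi> q) then (<) else (>)) (\<pi> ! (r - 1)) (\<pi> ! r)"
    if "p < r" "r \<le> q" for r
  proof -
    have "asc_top \<pi> r \<longleftrightarrow> even (run_changes \<pi> q)"
      using same_run[OF that] by (simp add: asc_top_iff_even_run_changes)
    moreover have "\<pi> ! (r - 1) \<noteq> \<pi> ! r"
      using that assms nth_eq_iff[of "r - 1" r] by auto
    ultimately show ?thesis
      using that by (auto simp: asc_top_def)
  qed
  moreover have "transp (if even (run_changes \<pi> q) then (<) else (>) :: nat \<Rightarrow> nat \<Rightarrow> bool)"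
    by simp
  ultimately show ?thesis
    using transp_chain[where f = "(!) \<pi>"] assms(1) by blast
qed

text \<open>The predecessor is the last letter before the maximal factor containing v.\<close>
lemma run_index_pred:
  assumes v: "v \<in> {1..n}" and "2 \<le> run_index v"
  shows "\<exists>u. adj (perm_rows \<pi>) n u v \<and> run_index u + 1 = run_index v"
proof -
  define p where "p = position v"
  have p: "p < n" "\<pi> ! p = v" using position_lt[OF v] p_def by auto
  have run_index_v: "run_index v = run_changes \<pi> p + 1" using p run_index_nth by metis
  define q where "q = (LEAST q. run_changes \<pi> q = run_changes \<pi> p)"
  have rq: "run_changes \<pi> q = run_changes \<pi> p" unfolding q_def by (rule LeastI[of _ p]) simp
  have qp: "q \<le> p" unfolding q_def by (rule Least_le) simp
  have q0: "q \<noteq> 0"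
  proof
    assume "q = 0"
    with rq assms(2) run_index_v show False by (simp add: run_changes_0)
  qed
  have "run_changes \<pi> (q - 1) \<noteq> run_changes \<pi> p"
    using q0 not_less_Least[of "q - 1" "\<lambda>q. run_changes \<pi> q = run_changes \<pi> p"] q_def by auto
  moreover have "run_changes \<pi> (q - 1) \<le> run_changes \<pi> q" by (rule run_changes_mono) simp
  moreover have "run_changes \<pi> q \<le> run_changes \<pi> (q - 1) + 1"
    using run_changes_Suc[of \<pi> "q - 1"] q0 by simp
  ultimately have pred: "run_changes \<pi> (q - 1) + 1 = run_changes \<pi> p" using rq by simp
  define u where "u = \<pi> ! (q - 1)"
  have u: "u \<in> {1..n}" "run_index u + 1 = run_index v"
    using nth_in_range[of "q - 1"] run_index_nth[of "q - 1"] qp p pred run_index_v u_def by auto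
  have "(if even (run_changes \<pi> p) then (<) else (>)) (\<pi> ! (q - 1)) (\<pi> ! p)"
  proof (rule run_monotone)
    show "q - 1 < p" using qp q0 by simp
    show "run_changes \<pi> r = run_changes \<pi> p" if "q - 1 < r" "r \<le> p" for r
      using that q0 rq run_changes_mono[of q r \<pi>] run_changes_mono[of r p \<pi>] by simp
  qed (rule p(1))
  hence order: "(if even (run_changes \<pi> p) then (<) else (>)) u v"
    by (simp only: u_def p(2))
  have "run_index u = run_changes \<pi> p"
    using u(2) run_index_v by simp
  hence "u \<in> perm_rows \<pi> \<longleftrightarrow> even (run_changes \<pi> p)" "v \<in> perm_rows \<pi> \<longleftrightarrow> odd (run_changes \<pi> p)"
    using perm_rows_iff[OF u(1)] perm_rows_iff[OF v] run_index_v by simp_all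
  with order u(1) v have "adj (perm_rows \<pi>) n u v"
    by (cases "even (run_changes \<pi> p)") (auto simp: adj_def cell_def fcols_def)
  with u(2) show ?thesis by blast
qed

sublocale toppling_levels "perm_rows \<pi>" n run_index
proof
  show "perm_rows \<pi> \<subseteq> {0..n}" by (rule perm_rows_subset)
  show "0 \<in> perm_rows \<pi>" by (simp add: perm_rows_def)
  show "run_index 0 = 0" by (simp add: run_index_def)
  show "1 \<le> run_index v \<and> run_index v \<le> n" if "v \<in> {1..n}" for v
    using position_lt[OF that] run_changes_le[of \<pi> "position v"] that by (auto simp: run_index_def)
  show "v \<in> perm_rows \<pi> \<longleftrightarrow> even (run_index v)" if "v \<in> {1..n}" for v
    using that by (rule perm_rows_iff)
  show "\<exists>u. adj (perm_rows \<pi>) n u v \<and> run_index u + 1 = run_index v"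
    if "v \<in> {1..n}" "2 \<le> run_index v" for v
    using that by (rule run_index_pred)
qed

lemma filter_run_index_sorted:
  "sorted_wrt (if odd k then (<) else (>)) (filter (\<lambda>x. run_index x = k) \<pi>)"
proof -
  have "sorted_wrt (\<lambda>x y. run_index x = k \<longrightarrow> run_index y = k \<longrightarrow> (if odd k then (<) else (>)) x y) \<pi>"
    unfolding sorted_wrt_iff_nth_less length_eq
  proof (intro allI impI)
    fix p q assume pq: "p < q" "q < n" and k: "run_index (\<pi> ! p) = k" "run_index (\<pi> ! q) = k"
    hence same: "run_changes \<pi> p = run_changes \<pi> q" "run_changes \<pi> q + 1 = k"
      using run_index_nth[of p] run_index_nth[of q] by auto
    have "(if even (run_changes \<pi> q) then (<) else (>)) (\<pi> ! p) (\<pi> ! q)"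
    proof (rule run_monotone[OF pq])
      show "run_changes \<pi> r = run_changes \<pi> q" if "p < r" "r \<le> q" for r
        using that same run_changes_mono[of p r \<pi>] run_changes_mono[of r q \<pi>] by simp
    qed
    with same show "(if odd k then (<) else (>)) (\<pi> ! p) (\<pi> ! q)" by auto
  qed
  hence "sorted_wrt (\<lambda>x y. run_index x = k \<longrightarrow> run_index y = k \<longrightarrow> (if odd k then (<) else (>)) x y)
    (filter (\<lambda>x. run_index x = k) \<pi>)"
    by (rule sorted_wrt_filter)
  thus ?thesis by (rule sorted_wrt_mono_rel[rotated]) auto
qed

lemma phase_word_level_config:
  assumes "1 \<le> k"
  shows "phase_word (perm_rows \<pi>) n level_config k = filter (\<lambda>x. run_index x = k) \<pi>"
proof -
  let ?F = "filter (\<lambda>x. run_index x = k) \<pi>"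
  have set_F: "canon_top (perm_rows \<pi>) n level_config k = set ?F"
    using canon_top_level_config[OF assms] set_eq by auto
  show ?thesis
  proof (cases "odd k")
    case True
    with filter_run_index_sorted[of k] have "sorted_wrt (<) ?F" by simp
    with True set_F show ?thesis
      by (simp add: phase_word_def sorted_list_of_set_set_strict del: set_filter)
  next
    case False
    with filter_run_index_sorted[of k] have "sorted_wrt (<) (rev ?F)"
      by (simp add: sorted_wrt_rev)
    hence "sorted_list_of_set (set ?F) = rev ?F"
      using sorted_list_of_set_set_strict[of "rev ?F"] by (simp del: set_filter)
    with False set_F show ?thesis
      by (simp add: phase_word_def del: set_filter)
  qed
qed

lemma Psi_level_tableau: "Psi (perm_rows \<pi>) n level_tableau = \<pi>"
proof -
  have words: "map (phase_word (perm_rows \<pi>) n level_config) [1..<2*n+3]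
      = map (\<lambda>k. filter (\<lambda>x. run_index x = k) \<pi>) [1..<2*n+3]"
    by (rule map_cong[OF refl]) (simp add: phase_word_level_config)
  have "sorted (map run_index \<pi>)"
    unfolding sorted_iff_nth_mono using length_eq by (simp add: run_index_nth run_changes_mono)
  hence "concat (map (\<lambda>k. filter (\<lambda>x. run_index x = k) \<pi>) [1..<2*n+3])
      = filter (\<lambda>x. run_index x < 2*n+3) \<pi>"
    using level_range set_eq by (intro concat_filter_key) auto
  also have "\<dots> = \<pi>"
    using level_range set_eq by (force intro: filter_True)
  finally show ?thesis
    unfolding Psi_def canon_word_eq_concat_phase_word words .
qed

lemma minrec_eq_level_config: "minrec n \<pi> = level_config"
proof -
  have "(THE T. T \<in> EWtab (perm_rows \<pi>) n \<and> Psi (perm_rows \<pi>) n T = \<pi>) = level_tableau"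
  proof (rule the_equality)
    fix T assume T: "T \<in> EWtab (perm_rows \<pi>) n \<and> Psi (perm_rows \<pi>) n T = \<pi>"
    hence "canon_word (perm_rows \<pi>) n (phi_TC (perm_rows \<pi>) n T)
        = canon_word (perm_rows \<pi>) n level_config"
      using Psi_level_tableau by (simp add: Psi_def)
    with T show "T = level_tableau" by (intro level_tableau_unique) simp_all
  qed (use level_tableau_EWtab Psi_level_tableau in blast)
  thus ?thesis by (simp add: minrec_def)
qed

lemma A_block_iff: "j \<in> A_block \<pi> k \<longleftrightarrow> j \<in> {1..n} \<and> run_index j + 1 = 2 * k"
proof -
  have "j \<in> A_block \<pi> k \<longleftrightarrow> (\<exists>p<n. \<pi> ! p = j \<and> asc_top \<pi> p \<and> run_changes \<pi> p div 2 + 1 = k)"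
    using length_eq by (auto simp: A_block_def)
  also have "\<dots> \<longleftrightarrow> j \<in> {1..n} \<and> asc_top \<pi> (position j) \<and> run_changes \<pi> (position j) div 2 + 1 = k"
    using position_lt position_nth nth_in_range by metis
  also have "\<dots> \<longleftrightarrow> j \<in> {1..n} \<and> run_index j + 1 = 2 * k"
    by (auto simp: run_index_def asc_top_iff_even_run_changes) presburger+
  finally show ?thesis .
qed

lemma D_block_iff: "1 \<le> k \<Longrightarrow> j \<in> D_block \<pi> k \<longleftrightarrow> j \<in> {1..n} \<and> run_index j = 2 * k"
proof -
  assume k: "1 \<le> k"
  have "j \<in> D_block \<pi> k \<longleftrightarrow> (\<exists>p<n. \<pi> ! p = j \<and> \<not> asc_top \<pi> p \<and> (run_changes \<pi> p + 1) div 2 = k)"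
    using length_eq k by (auto simp: D_block_def)
  also have "\<dots> \<longleftrightarrow> j \<in> {1..n} \<and> \<not> asc_top \<pi> (position j) \<and> (run_changes \<pi> (position j) + 1) div 2 = k"
    using position_lt position_nth nth_in_range by metis
  also have "\<dots> \<longleftrightarrow> j \<in> {1..n} \<and> run_index j = 2 * k"
    using k by (auto simp: run_index_def asc_top_iff_even_run_changes) presburger+
  finally show ?thesis .
qed

lemma minrec_D_block:
  assumes i: "i \<in> {1..n}" and "i \<in> D_block \<pi> l"
  shows "minrec n \<pi> i = card {j. j > i \<and> (\<exists>k > l. j \<in> A_block \<pi> k)}"
proof -
  have "l \<noteq> 0" using assms by (auto simp: D_block_def split: if_splits)
  hence l: "1 \<le> l" "run_index i = 2 * l" using assms D_block_iff[of l i] by auto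
  hence row: "i \<in> perm_rows \<pi>" using perm_rows_iff[OF i] by simp
  have "adj (perm_rows \<pi>) n j i \<and> run_index i < run_index j \<longleftrightarrow> j > i \<and> (\<exists>k > l. j \<in> A_block \<pi> k)"
    for j
  proof
    assume j: "adj (perm_rows \<pi>) n j i \<and> run_index i < run_index j"
    with row have "cell (perm_rows \<pi>) n i j" by (auto simp: adj_def cell_def fcols_def)
    hence "i < j" "j \<in> {1..n}" "odd (run_index j)"
      using cell_level_parity by (auto simp: cell_def fcols_def)
    moreover obtain m where "run_index j = 2 * m + 1"
      using \<open>odd (run_index j)\<close> by (rule oddE)
    ultimately have "j > i" "j \<in> A_block \<pi> (m + 1)" "l < m + 1"
      using j l by (simp_all add: A_block_iff)
    thus "j > i \<and> (\<exists>k > l. j \<in> A_block \<pi> k)" by blast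
  next
    assume "j > i \<and> (\<exists>k > l. j \<in> A_block \<pi> k)"
    then obtain k where k: "i < j" "l < k" "j \<in> {1..n}" "run_index j + 1 = 2 * k"
      by (auto simp: A_block_iff)
    hence "j \<notin> perm_rows \<pi>" using perm_rows_iff by presburger
    with k row show "adj (perm_rows \<pi>) n j i \<and> run_index i < run_index j"
      using l by (auto simp: adj_def cell_def fcols_def)
  qed
  thus ?thesis
    using level_config_eq[OF i] by (simp add: minrec_eq_level_config)
qed

lemma minrec_A_block:
  assumes i: "i \<in> {1..n}" and "i \<in> A_block \<pi> l"
  shows "minrec n \<pi> i = card {j. j < i \<and> (\<exists>k \<ge> l. j \<in> D_block \<pi> k)}"
proof -
  have l: "run_index i + 1 = 2 * l" using assms A_block_iff by auto
  hence column: "i \<notin> perm_rows \<pi>" using perm_rows_iff[OF i] by presburger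
  have "adj (perm_rows \<pi>) n j i \<and> run_index i < run_index j \<longleftrightarrow> j < i \<and> (\<exists>k \<ge> l. j \<in> D_block \<pi> k)"
    for j
  proof
    assume j: "adj (perm_rows \<pi>) n j i \<and> run_index i < run_index j"
    with column have "cell (perm_rows \<pi>) n j i" by (auto simp: adj_def cell_def)
    hence "j < i" "even (run_index j)"
      using cell_level_parity by (auto simp: cell_def)
    moreover have "j \<noteq> 0" using j level_sink by (metis not_less_zero)
    ultimately have j_range: "j \<in> {1..n}" using i by auto
    obtain k where k: "run_index j = 2 * k"
      using \<open>even (run_index j)\<close> by (rule evenE)
    hence "1 \<le> k" using level_range[OF j_range] by simp
    hence "j \<in> D_block \<pi> k" using D_block_iff j_range k by simp
    moreover have "l \<le> k" using j l k by simp
    ultimately show "j < i \<and> (\<exists>k \<ge> l. j \<in> D_block \<pi> k)"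
      using \<open>j < i\<close> by blast
  next
    assume "j < i \<and> (\<exists>k \<ge> l. j \<in> D_block \<pi> k)"
    then obtain k where k: "j < i" "l \<le> k" "j \<in> D_block \<pi> k" by auto
    moreover have "1 \<le> l" using l by simp
    ultimately have "j \<in> {1..n}" "run_index j = 2 * k"
      using D_block_iff[of k j] by auto
    with k column l show "adj (perm_rows \<pi>) n j i \<and> run_index i < run_index j"
      using perm_rows_iff i by (auto simp: adj_def cell_def fcols_def)
  qed
  thus ?thesis
    using level_config_eq[OF i] by (simp add: minrec_eq_level_config)
qed

end

theorem lemma5p6:
  fixes n :: nat and \<pi> :: "nat list"
  assumes "distinct \<pi>" and "set \<pi> = {1..n}"
  shows "\<forall>i \<in> {1..n}.
     (\<forall>l. i \<in> D_block \<pi> l \<longrightarrow>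
        minrec n \<pi> i = card {j. j > i \<and> (\<exists>k > l. j \<in> A_block \<pi> k)})
   \<and> (\<forall>l. i \<in> A_block \<pi> l \<longrightarrow>
        minrec n \<pi> i = card {j. j < i \<and> (\<exists>k \<ge> l. j \<in> D_block \<pi> k)})"
proof -
  interpret perm_list n \<pi> using assms by unfold_locales
  show ?thesis using minrec_D_block minrec_A_block by blast
qed

end
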